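(* Let $A$ be Hurwitz and let $M_{\rm initial},\sigma_{\rm slowest}>0$ satisfy $\|e^{At}\|_2\le M_{\rm initial}e^{-\sigma_{\rm slowest}t}$ for all $t\ge0$. Let $\mathcal{B}_{\rm ultimate}=\{x\in\mathbb{R}^n:\|x\|_2\le 2M_{\rm initial}\|B\|_2/\sigma_{\rm slowest}\}$. If a trajectory $x(\cdot)$ of the relay feedback system $\dot x=Ax-B\,\mathrm{sign}(Cx)$ has $x(0)\in\mathcal{B}_{\rm ultimate}$, then $$\max_{t\ge0}\|x(t)\|_2\le \widehat M_{\rm excursion}:=\frac{M_{\rm initial}(2M_{\rm initial}+1)}{\sigma_{\rm slowest}}\|B\|_2 .$$
   Context: $A$ is the $n\times n$ observer canonical matrix ($A_{i+1,i}=1$ for $i=1,\dots,n-1$, last column $(-a_0,\dots,-a_{n-1})^T$, other entries zero), $B=(b_0,\dots,b_{n-1})^T$, $C=(0,\dots,0,1)$. $\mathrm{sign}(e)=1$ for $e>0$, $-1$ for $e<0$, and $[-1,1]$ for $e=0$. *)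

theory Defs
  imports "HOL-Analysis.Analysis"
begin

primrec matpow :: "real^'n^'n \<Rightarrow> nat \<Rightarrow> real^'n^'n::finite" where
  "matpow M 0 = mat 1"
| "matpow M (Suc k) = M ** matpow M k"

definition mat_exp :: "real^'n^'n \<Rightarrow> real^'n^'n::finite" where
  "mat_exp M = (\<Sum>k. (1 / fact k) *\<^sub>R matpow M k)"

definition norm2 :: "real^'n^'m \<Rightarrow> real" where
  "norm2 M = onorm (\<lambda>x::real^'n::finite. M *v x)"

definition hurwitz :: "real^'n^'n::finite \<Rightarrow> bool" where
  "hurwitz M \<longleftrightarrow> (\<forall>(l::complex) (v::complex^'n). v \<noteq> 0 \<and> map_matrix complex_of_real M *v v = l *s v
       \<longrightarrow> Re l < 0)"

definition sign_set :: "real \<Rightarrow> real set" where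
  "sign_set e = (if e > 0 then {1} else if e < 0 then {-1} else {-1..1})"

text \<open>The index type 'n is enumerated by a bijection
  idx : 'n -> {0..<n} (idx i = k means i is the (k+1)-th coordinate).\<close>
definition obs_A :: "('n::finite \<Rightarrow> nat) \<Rightarrow> (nat \<Rightarrow> real) \<Rightarrow> real^'n^'n" where
  "obs_A idx a = (\<chi> i j. (if idx i = idx j + 1 then 1 else 0)
                       + (if idx j = CARD('n) - 1 then - a (idx i) else 0))"

definition obs_B :: "('n::finite \<Rightarrow> nat) \<Rightarrow> (nat \<Rightarrow> real) \<Rightarrow> real^'n" where
  "obs_B idx b = (\<chi> i. b (idx i))"

definition obs_C :: "('n::finite \<Rightarrow> nat) \<Rightarrow> real^'n" where
  "obs_C idx = (\<chi> i. if idx i = CARD('n) - 1 then 1 else 0)"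

text \<open>Trajectory (Caratheodory solution on [0,oo)) of x' \<in> A x - B sign(C x):
  there is a selection u(t) \<in> sign(C x(t)) such that
  x(t) = x(0) + \<integral>_0^t (A x(s) - B u(s)) ds for all t \<ge> 0.\<close>
definition relay_trajectory :: "real^'n^'n \<Rightarrow> real^'n \<Rightarrow> real^'n \<Rightarrow> (real \<Rightarrow> real^'n::finite) \<Rightarrow> bool" where
  "relay_trajectory A B C x \<longleftrightarrow>
     (\<exists>u::real \<Rightarrow> real. (\<forall>t\<ge>0. u t \<in> sign_set (C \<bullet> x t)) \<and>
        (\<forall>t\<ge>0. ((\<lambda>s. A *v x s - u s *\<^sub>R B) has_integral (x t - x 0)) {0..t}))"

end

theory Submission
  imports Defs
begin

text \<open>Put \<open>W(t) = - \<integral>\<^sub>0\<^sup>t u(s) B ds\<close>, where \<open>u(s) \<in> sign(C x(s))\<close> is the relay input.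
  Variation of constants gives \<open>x(t) = exp(tA) x(0) + \<integral>\<^sub>0\<^sup>t exp((t - s)A) dW(s)\<close>, and since \<open>W\<close>
  is \<open>\<parallel>B\<parallel>\<close>-Lipschitz, the Stieltjes integral has norm at most
  \<open>\<integral>\<^sub>0\<^sup>t M exp(-\<sigma>(t - s)) \<parallel>B\<parallel> ds \<le> M \<parallel>B\<parallel> / \<sigma>\<close>. Hence \<open>\<parallel>x(t)\<parallel> \<le> M \<parallel>x(0)\<parallel> + M \<parallel>B\<parallel> / \<sigma>\<close>,
  and the bound on \<open>x(0)\<close> finishes the proof. As \<open>W\<close> need not be differentiable, the estimate
  of the Stieltjes integral is first proved for the Steklov averages \<open>(1/h) \<integral>\<^sub>s\<^sup>s\<^sup>+\<^sup>h W\<close>,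
  which are \<open>C\<^sup>1\<close> with derivative bounded by \<open>\<parallel>B\<parallel>\<close> and lie within \<open>\<parallel>B\<parallel> h\<close> of \<open>W\<close>,
  and then \<open>h \<rightarrow> 0\<close>.\<close>

section \<open>The matrix exponential\<close>

lemma matpow_scaleR: "matpow (r *\<^sub>R A) k = r ^ k *\<^sub>R matpow A k"
  by (induction k) (simp_all add: matrix_scalar_ac scalar_matrix_assoc[symmetric])

lemma matpow_Suc_right: "matpow A (Suc k) = matpow A k ** A"
proof (induction k)
  case (Suc k)
  have "matpow A (Suc (Suc k)) = A ** (matpow A k ** A)"
    using Suc by simp
  also have "\<dots> = matpow A (Suc k) ** A"
    by (simp add: matrix_mul_assoc)
  finally show ?case .
qed simp

lemma abs_matpow_entry_le:
  "\<bar>matpow A k $ i $ j\<bar> \<le> (\<Sum>p\<in>UNIV. \<Sum>q\<in>UNIV. \<bar>A $ p $ q\<bar>) ^ k"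
proof (induction k arbitrary: i j)
  case 0
  then show ?case by (simp add: mat_def)
next
  case (Suc k)
  let ?K = "\<Sum>p\<in>UNIV. \<Sum>q\<in>UNIV. \<bar>A $ p $ q\<bar>"
  have row: "(\<Sum>l\<in>UNIV. \<bar>A $ i $ l\<bar>) \<le> ?K"
    by (rule member_le_sum[of i UNIV "\<lambda>p. \<Sum>q\<in>UNIV. \<bar>A $ p $ q\<bar>"]) (auto simp: sum_nonneg)
  have "\<bar>matpow A (Suc k) $ i $ j\<bar> \<le> (\<Sum>l\<in>UNIV. \<bar>A $ i $ l\<bar> * ?K ^ k)"
    by (simp add: matrix_matrix_mult_def, rule order_trans[OF sum_abs])
      (auto intro!: sum_mono mult_left_mono Suc simp: abs_mult)
  also have "\<dots> \<le> ?K * ?K ^ k"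
    using row by (simp add: sum_distrib_right[symmetric] mult_right_mono sum_nonneg)
  finally show ?case by simp
qed

lemma summable_matpow_entry_series: "summable (\<lambda>k. matpow A k $ i $ j / fact k * r ^ k)"
proof (rule summable_comparison_test'[where N = 0])
  let ?K = "\<Sum>p\<in>UNIV. \<Sum>q\<in>UNIV. \<bar>A $ p $ q\<bar>"
  show "summable (\<lambda>k. inverse (fact k) * (?K * \<bar>r\<bar>) ^ k)"
    by (rule summable_exp)
  fix k :: nat
  have "norm (matpow A k $ i $ j / fact k * r ^ k) = \<bar>matpow A k $ i $ j\<bar> * \<bar>r\<bar> ^ k / fact k"
    by (simp add: abs_mult power_abs)
  also have "\<dots> \<le> ?K ^ k * \<bar>r\<bar> ^ k / fact k"
    by (intro divide_right_mono mult_right_mono abs_matpow_entry_le) auto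
  also have "\<dots> = inverse (fact k) * (?K * \<bar>r\<bar>) ^ k"
    by (simp add: power_mult_distrib divide_inverse mult.commute)
  finally show "norm (matpow A k $ i $ j / fact k * r ^ k) \<le> inverse (fact k) * (?K * \<bar>r\<bar>) ^ k" .
qed

lemma sums_vecI: "(\<And>i. (\<lambda>k. f k $ i) sums s $ i) \<Longrightarrow> f sums s"
  unfolding sums_def by (rule vec_tendstoI) simp

lemma mat_exp_entry: "mat_exp (r *\<^sub>R A) $ i $ j = (\<Sum>k. matpow A k $ i $ j / fact k * r ^ k)"
proof -
  have "(\<lambda>k. (1 / fact k) *\<^sub>R matpow (r *\<^sub>R A) k)
      sums (\<chi> i j. \<Sum>k. matpow A k $ i $ j / fact k * r ^ k)"
  proof (intro sums_vecI)
    fix p q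
    have "((1 / fact k) *\<^sub>R matpow (r *\<^sub>R A) k) $ p $ q = matpow A k $ p $ q / fact k * r ^ k" for k
      by (simp add: matpow_scaleR)
    then show "(\<lambda>k. ((1 / fact k) *\<^sub>R matpow (r *\<^sub>R A) k) $ p $ q)
        sums (\<chi> i j. \<Sum>k. matpow A k $ i $ j / fact k * r ^ k) $ p $ q"
      using summable_sums[OF summable_matpow_entry_series] by simp
  qed
  then show ?thesis
    by (simp add: mat_exp_def sums_iff)
qed

lemma mat_exp_zero: "mat_exp (0 :: real^'n::finite^'n) = mat 1"
proof -
  have "mat_exp (0 *\<^sub>R (0 :: real^'n^'n)) $ i $ j = mat 1 $ i $ j" for i j
    by (simp only: mat_exp_entry powser_zero) simp
  then show ?thesis
    by (metis scale_zero_left vec_eq_iff)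
qed

lemma has_real_derivative_mat_exp_entry:
  "((\<lambda>r. mat_exp (r *\<^sub>R A) $ i $ j) has_real_derivative (mat_exp (r *\<^sub>R A) ** A) $ i $ j) (at r)"
proof -
  define c where "c l k = matpow A k $ i $ l / fact k" for l k
  have summable_c: "summable (\<lambda>k. c l k * y ^ k)" for l y
    unfolding c_def by (rule summable_matpow_entry_series)
  have "((\<lambda>r. \<Sum>k. c j k * r ^ k) has_real_derivative (\<Sum>k. diffs (c j) k * r ^ k)) (at r)"
    by (rule termdiffs_strong_converges_everywhere summable_c)+
  also have "(\<Sum>k. diffs (c j) k * r ^ k) = (\<Sum>k. \<Sum>l\<in>UNIV. c l k * r ^ k * A $ l $ j)"
  proof (rule suminf_cong)
    fix k
    have "diffs (c j) k * r ^ k = (\<Sum>l\<in>UNIV. matpow A k $ i $ l * A $ l $ j) / fact k * r ^ k"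
      by (simp add: diffs_def c_def matpow_Suc_right matrix_matrix_mult_def del: of_nat_Suc matpow.simps)
    also have "\<dots> = (\<Sum>l\<in>UNIV. c l k * r ^ k * A $ l $ j)"
      unfolding c_def sum_divide_distrib sum_distrib_right by (rule sum.cong[OF refl]) simp
    finally show "diffs (c j) k * r ^ k = (\<Sum>l\<in>UNIV. c l k * r ^ k * A $ l $ j)" .
  qed
  also have "\<dots> = (\<Sum>l\<in>UNIV. (\<Sum>k. c l k * r ^ k) * A $ l $ j)"
    by (subst suminf_sum) (auto intro!: sum.cong suminf_mult2[symmetric] summable_mult2 summable_c)
  finally show ?thesis
    by (simp add: matrix_matrix_mult_def mat_exp_entry c_def)
qed

lemma has_vector_derivative_vecI:
  fixes f :: "real \<Rightarrow> real^'n::finite"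
  assumes "\<And>i. ((\<lambda>s. f s $ i) has_real_derivative f' $ i) (at x within S)"
  shows "(f has_vector_derivative f') (at x within S)"
  unfolding has_vector_derivative_def
proof (subst has_derivative_componentwise_within, intro ballI)
  fix b :: "real^'n" assume "b \<in> Basis"
  then obtain k where b: "b = axis k 1"
    by (auto simp: Basis_vec_def)
  have "((\<lambda>s. f s $ k) has_derivative (\<lambda>h. h * f' $ k)) (at x within S)"
    using assms[of k] unfolding has_field_derivative_def by (simp add: mult_commute_abs)
  then show "((\<lambda>x. f x \<bullet> b) has_derivative (\<lambda>x. x *\<^sub>R f' \<bullet> b)) (at x within S)"
    by (simp add: b inner_axis)
qed

lemma has_vector_derivative_mat_exp_mult:
  fixes z :: "real \<Rightarrow> real^'n::finite"
  assumes "(z has_vector_derivative z') (at s within S)"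
  shows "((\<lambda>s. mat_exp ((t - s) *\<^sub>R A) *v z s) has_vector_derivative
      mat_exp ((t - s) *\<^sub>R A) *v (z' - A *v z s)) (at s within S)"
proof -
  let ?E = "\<lambda>s. mat_exp ((t - s) *\<^sub>R A)"
  have E': "((\<lambda>s. ?E s $ i $ j) has_real_derivative - (?E s ** A) $ i $ j) (at s within S)" for i j
  proof -
    have "((\<lambda>r. mat_exp (r *\<^sub>R A) $ i $ j) \<circ> (\<lambda>s. t - s) has_real_derivative
        (?E s ** A) $ i $ j * (- 1)) (at s)"
      by (rule DERIV_chain[OF has_real_derivative_mat_exp_entry]) (auto intro!: derivative_eq_intros)
    then show ?thesis
      by (auto simp: o_def intro: has_field_derivative_at_within)
  qed
  have z': "((\<lambda>s. z s $ j) has_real_derivative z' $ j) (at s within S)" for j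
    using bounded_linear.has_vector_derivative[OF bounded_linear_vec_nth assms, of j]
    by (simp add: has_real_derivative_iff_has_vector_derivative)
  have "((\<lambda>s. ?E s *v z s) has_vector_derivative ?E s *v z' - (?E s ** A) *v z s) (at s within S)"
  proof (rule has_vector_derivative_vecI)
    fix i
    have "((\<lambda>s. \<Sum>j\<in>UNIV. ?E s $ i $ j * z s $ j) has_real_derivative
        (\<Sum>j\<in>UNIV. ?E s $ i $ j * z' $ j + - ((?E s ** A) $ i $ j) * z s $ j)) (at s within S)"
      by (intro DERIV_sum DERIV_mult' E' z')
    then show "((\<lambda>s. (?E s *v z s) $ i) has_real_derivative (?E s *v z' - (?E s ** A) *v z s) $ i)
        (at s within S)"
      by (simp add: matrix_vector_mult_def sum.distrib sum_subtractf algebra_simps)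
  qed
  then show ?thesis
    by (simp add: matrix_vector_mult_diff_distrib matrix_vector_mul_assoc)
qed

lemma continuous_on_matrix_vector_mult [continuous_intros]:
  fixes A :: "real^'n::finite^'m::finite"
  shows "continuous_on S z \<Longrightarrow> continuous_on S (\<lambda>s. A *v z s)"
  by (rule bounded_linear.continuous_on[OF matrix_vector_mul_bounded_linear])

lemma continuous_on_mat_exp_mult [continuous_intros]:
  fixes z :: "real \<Rightarrow> real^'n::finite"
  assumes "continuous_on S z"
  shows "continuous_on S (\<lambda>s. mat_exp ((t - s) *\<^sub>R A) *v z s)"
proof -
  have entries: "continuous_on S (\<lambda>s. mat_exp ((t - s) *\<^sub>R A) $ i $ j)" for i j
  proof -
    have "continuous_on UNIV (\<lambda>r. mat_exp (r *\<^sub>R A) $ i $ j)"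
      by (intro continuous_at_imp_continuous_on ballI DERIV_isCont[OF has_real_derivative_mat_exp_entry])
    then show ?thesis
      by (rule continuous_on_compose2[OF _ continuous_on_diff[OF continuous_on_const continuous_on_id]]) simp
  qed
  have "continuous_on S (\<lambda>s. z s $ j)" for j
    by (intro continuous_on_component assms)
  with entries show ?thesis
    unfolding matrix_vector_mult_def by (intro continuous_on_vec_lambda continuous_on_sum continuous_on_mult)
qed

lemma variation_of_constants:
  fixes y g :: "real \<Rightarrow> real^'n::finite"
  assumes "0 \<le> t"
    and "\<And>s. s \<in> {0..t} \<Longrightarrow> (y has_vector_derivative A *v y s + g s) (at s within {0..t})"
  shows "((\<lambda>s. mat_exp ((t - s) *\<^sub>R A) *v g s) has_integral y t - mat_exp (t *\<^sub>R A) *v y 0) {0..t}"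
  using fundamental_theorem_of_calculus[OF assms(1)
      has_vector_derivative_mat_exp_mult[where t = t and A = A, OF assms(2)]]
  by (simp add: mat_exp_zero)

section \<open>Convolution with the matrix exponential\<close>

text \<open>The Stieltjes convolution \<open>\<integral>\<^sub>0\<^sup>t exp((t - s)A) dW(s)\<close>, integrated by parts so that it
  is defined for every continuous \<open>W\<close>.\<close>

definition stieltjes_convolution :: "real^'n^'n \<Rightarrow> (real \<Rightarrow> real^'n) \<Rightarrow> real \<Rightarrow> real^'n::finite" where
  "stieltjes_convolution A W t = W t + integral {0..t} (\<lambda>s. mat_exp ((t - s) *\<^sub>R A) *v (A *v W s))"

lemma stieltjes_convolution_diff:
  assumes "continuous_on {0..t} V" "continuous_on {0..t} W"
  shows "stieltjes_convolution A (\<lambda>s. W s - V s) t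
    = stieltjes_convolution A W t - stieltjes_convolution A V t"
proof -
  have int: "(\<lambda>s. mat_exp ((t - s) *\<^sub>R A) *v (A *v U s)) integrable_on {0..t}"
    if "continuous_on {0..t} U" for U
    using that by (intro integrable_continuous_real continuous_intros)
  show ?thesis
    unfolding stieltjes_convolution_def
    using integral_diff[OF int[OF assms(2)] int[OF assms(1)]]
    by (simp add: matrix_vector_mult_diff_distrib)
qed

lemma has_integral_stieltjes_convolution:
  fixes V :: "real \<Rightarrow> real^'n::finite"
  assumes "0 \<le> t"
    and V: "\<And>s. s \<in> {0..t} \<Longrightarrow> (V has_vector_derivative V' s) (at s within {0..t})"
  shows "((\<lambda>s. mat_exp ((t - s) *\<^sub>R A) *v V' s) has_integral
      stieltjes_convolution A V t - mat_exp (t *\<^sub>R A) *v V 0) {0..t}"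
proof -
  have "continuous_on {0..t} V"
    using V by (meson continuous_on_eq_continuous_within has_vector_derivative_continuous)
  then have "((\<lambda>s. mat_exp ((t - s) *\<^sub>R A) *v (A *v V s)) has_integral
      integral {0..t} (\<lambda>s. mat_exp ((t - s) *\<^sub>R A) *v (A *v V s))) {0..t}"
    by (intro integrable_integral integrable_continuous_real continuous_intros)
  moreover have "((\<lambda>s. mat_exp ((t - s) *\<^sub>R A) *v (V' s - A *v V s)) has_integral
      V t - mat_exp (t *\<^sub>R A) *v V 0) {0..t}"
    by (rule variation_of_constants[OF assms(1)]) (simp add: V)
  ultimately have "((\<lambda>s. mat_exp ((t - s) *\<^sub>R A) *v (V' s - A *v V s)
      + mat_exp ((t - s) *\<^sub>R A) *v (A *v V s)) has_integral
      V t - mat_exp (t *\<^sub>R A) *v V 0 + integral {0..t} (\<lambda>s. mat_exp ((t - s) *\<^sub>R A) *v (A *v V s))) {0..t}"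
    by (intro has_integral_add)
  then show ?thesis
    by (simp add: stieltjes_convolution_def matrix_vector_mult_diff_distrib diff_add_eq)
qed

definition steklov_average :: "real \<Rightarrow> (real \<Rightarrow> 'a::banach) \<Rightarrow> real \<Rightarrow> 'a" where
  "steklov_average h W s = integral {s..s + h} W /\<^sub>R h"

lemma steklov_average_eq_diff:
  fixes W :: "real \<Rightarrow> 'a::banach"
  assumes W: "continuous_on {0..} W" and "0 \<le> h" "0 \<le> s"
  shows "steklov_average h W s = (integral {0..s + h} W - integral {0..s} W) /\<^sub>R h"
proof -
  have "W integrable_on {0..s + h}"
    by (rule integrable_continuous_real[OF continuous_on_subset[OF W]]) auto
  then have "integral {s..s + h} W = integral {0..s + h} W - integral {0..s} W"
    using Henstock_Kurzweil_Integration.integral_combine[of 0 s "s + h" W] assms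
    by (simp add: algebra_simps)
  then show ?thesis
    by (simp add: steklov_average_def)
qed

lemma has_vector_derivative_steklov_average:
  fixes W :: "real \<Rightarrow> 'a::banach"
  assumes W: "continuous_on {0..} W" and h: "0 \<le> h" and s: "s \<in> {0..t}"
  shows "(steklov_average h W has_vector_derivative (W (s + h) - W s) /\<^sub>R h) (at s within {0..t})"
proof -
  define I where "I r = integral {0..r} W" for r
  have I': "(I has_vector_derivative W r) (at r within {0..t + h})" if "r \<in> {0..t + h}" for r
    unfolding I_def
    by (rule integral_has_vector_derivative[OF continuous_on_subset[OF W] that]) auto
  have "((\<lambda>r. r + h) has_vector_derivative 1) (at s within {0..t})"
    by (auto intro!: derivative_eq_intros simp flip: has_real_derivative_iff_has_vector_derivative)
  moreover have "(I has_vector_derivative W (s + h)) (at ((\<lambda>r. r + h) s) within (\<lambda>r. r + h) ` {0..t})"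
    by (rule has_vector_derivative_within_subset[OF I'[of "s + h"]]) (use s h in auto)
  ultimately have "((\<lambda>r. I (r + h)) has_vector_derivative W (s + h)) (at s within {0..t})"
    using vector_diff_chain_within[of "\<lambda>r. r + h" 1 s "{0..t}" I "W (s + h)"] by (simp add: o_def)
  moreover have "(I has_vector_derivative W s) (at s within {0..t})"
    by (rule has_vector_derivative_within_subset[OF I'[of s]]) (use s h in auto)
  ultimately have I_diff: "((\<lambda>r. (I (r + h) - I r) /\<^sub>R h) has_vector_derivative (W (s + h) - W s) /\<^sub>R h)
      (at s within {0..t})"
    by (intro derivative_eq_intros) (auto simp: scaleR_diff_right)
  show ?thesis
    by (rule has_vector_derivative_transform[OF s _ I_diff]) (use W h in \<open>auto simp: I_def steklov_average_eq_diff\<close>)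
qed

lemma norm_steklov_average_diff_le:
  fixes W :: "real \<Rightarrow> 'a::banach"
  assumes W: "L-lipschitz_on {0..} W" and h: "0 < h" and s: "0 \<le> s"
  shows "norm (steklov_average h W s - W s) \<le> L * h"
proof -
  have W_cont: "continuous_on {s..s + h} W"
    by (rule lipschitz_on_continuous_on[OF lipschitz_on_subset[OF W]]) (use s in auto)
  have "integral {s..s + h} W = integral {s..s + h} (\<lambda>r. W r - W s) + h *\<^sub>R W s"
    using integral_diff[OF integrable_continuous_real[OF W_cont] integrable_const_ivl, of "W s"] h
    by simp
  then have "steklov_average h W s - W s = integral {s..s + h} (\<lambda>r. W r - W s) /\<^sub>R h"
    using h by (simp add: steklov_average_def scaleR_add_right)
  moreover have "norm (integral {s..s + h} (\<lambda>r. W r - W s)) \<le> (L * h) * (s + h - s)"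
  proof (rule integral_bound)
    show "continuous_on {s..s + h} (\<lambda>r. W r - W s)"
      by (intro continuous_intros W_cont)
    fix r assume r: "r \<in> {s..s + h}"
    then have "norm (W r - W s) \<le> L * (r - s)"
      using lipschitz_on_normD[OF W, of r s] s by auto
    also have "\<dots> \<le> L * h"
      using r lipschitz_on_nonneg[OF W] by (intro mult_left_mono) auto
    finally show "norm (W r - W s) \<le> L * h" .
  qed (use h in auto)
  ultimately show ?thesis
    using h by (simp add: field_simps)
qed

section \<open>Integral equations with bounded input\<close>

lemma lipschitz_on_indefinite_integral:
  fixes g :: "real \<Rightarrow> 'a::banach"
  assumes g: "\<And>t. 0 \<le> t \<Longrightarrow> g integrable_on {0..t}"
    and bound: "\<And>s. 0 \<le> s \<Longrightarrow> norm (g s) \<le> L"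
  shows "L-lipschitz_on {0..} (\<lambda>t. integral {0..t} g)"
proof -
  have L: "0 \<le> L"
    using bound[of 0] norm_ge_zero order_trans by blast
  show ?thesis
  proof (rule lipschitz_on_leI[OF _ L])
    fix s r :: real assume "s \<in> {0..}" "r \<in> {0..}" "s \<le> r"
    then have sr: "0 \<le> s" "s \<le> r" by auto
    have "integral {0..r} g - integral {0..s} g = integral {s..r} g"
      using Henstock_Kurzweil_Integration.integral_combine[of 0 s r g] g[of r] sr by (simp add: algebra_simps)
    moreover have "g integrable_on {s..r}"
      by (rule integrable_subinterval_real[OF g[of r]]) (use sr in auto)
    then have "norm (integral {s..r} g) \<le> L * (r - s)"
      using has_integral_bound_real[OF L _ integrable_integral, where S = "{}" and f = g and a = s and b = r]
        bound sr by auto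
    ultimately show "dist (integral {0..s} g) (integral {0..r} g) \<le> L * dist s r"
      using sr by (simp add: dist_norm norm_minus_commute)
  qed
qed

lemma continuous_on_of_has_integral_increments:
  fixes x f :: "real \<Rightarrow> 'a::banach"
  assumes "\<And>t. 0 \<le> t \<Longrightarrow> (f has_integral (x t - x 0)) {0..t}"
  shows "continuous_on {0..T} x"
proof -
  have "f integrable_on {0..T}"
    using assms[of T] by (cases "0 \<le> T") auto
  then have "continuous_on {0..T} (\<lambda>t. x 0 + integral {0..t} f)"
    by (intro continuous_intros indefinite_integral_continuous_1)
  then show ?thesis
    by (rule continuous_on_eq) (use assms integral_unique in force)
qed

lemma integral_equation_input_integrable:
  fixes x g :: "real \<Rightarrow> real^'n::finite"
  assumes x: "\<And>t. 0 \<le> t \<Longrightarrow> ((\<lambda>s. A *v x s + g s) has_integral (x t - x 0)) {0..t}"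
    and "0 \<le> t"
  shows "g integrable_on {0..t}"
proof -
  have "(\<lambda>s. A *v x s) integrable_on {0..t}"
    by (intro integrable_continuous_real continuous_intros continuous_on_of_has_integral_increments[OF x])
  with x[OF \<open>0 \<le> t\<close>] show ?thesis
    using integrable_diff by fastforce
qed

lemma integral_equation_solution:
  fixes x g :: "real \<Rightarrow> real^'n::finite"
  assumes x: "\<And>t. 0 \<le> t \<Longrightarrow> ((\<lambda>s. A *v x s + g s) has_integral (x t - x 0)) {0..t}"
    and t: "0 \<le> t"
  shows "x t = mat_exp (t *\<^sub>R A) *v x 0 + stieltjes_convolution A (\<lambda>s. integral {0..s} g) t"
proof -
  define W where "W s = integral {0..s} g" for s
  \<comment> \<open>Unlike \<open>x\<close>, \<open>y = x - W\<close> is differentiable, with \<open>y' = A x\<close>.\<close>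
  define y where "y s = x 0 + integral {0..s} (\<lambda>r. A *v x r)" for s
  have x_cont: "continuous_on {0..T} x" for T
    by (rule continuous_on_of_has_integral_increments[OF x])
  have y_eq: "y s = x s - W s" if "0 \<le> s" for s
  proof -
    have "x s - x 0 = integral {0..s} (\<lambda>r. A *v x r) + W s"
      unfolding W_def
      using integral_unique[OF x[OF that]] integrable_continuous_real[OF continuous_on_matrix_vector_mult[OF x_cont]]
        integral_add integral_equation_input_integrable[OF x that] by metis
    then show ?thesis
      by (simp add: y_def algebra_simps)
  qed
  have "(y has_vector_derivative A *v y s + A *v W s) (at s within {0..t})" if s: "s \<in> {0..t}" for s
  proof -
    have "((\<lambda>u. integral {0..u} (\<lambda>r. A *v x r)) has_vector_derivative A *v x s) (at s within {0..t})"
      by (rule integral_has_vector_derivative[OF continuous_on_matrix_vector_mult[OF x_cont] s])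
    then have "(y has_vector_derivative A *v x s) (at s within {0..t})"
      unfolding y_def using has_vector_derivative_add[OF has_vector_derivative_const] by fastforce
    moreover have "A *v x s = A *v y s + A *v W s"
      using y_eq[of s] s by (simp add: matrix_vector_right_distrib[symmetric])
    ultimately show ?thesis by simp
  qed
  then have "integral {0..t} (\<lambda>s. mat_exp ((t - s) *\<^sub>R A) *v (A *v W s)) = y t - mat_exp (t *\<^sub>R A) *v y 0"
    by (intro integral_unique variation_of_constants[OF t])
  then show ?thesis
    using y_eq[OF t] y_eq[of 0] by (simp add: stieltjes_convolution_def W_def[abs_def] algebra_simps)
qed

section \<open>Exponentially stable matrices\<close>

lemma has_integral_exp_decay:
  fixes \<sigma> t :: real
  assumes "\<sigma> \<noteq> 0" "0 \<le> t"
  shows "((\<lambda>s. exp (- \<sigma> * (t - s))) has_integral (1 - exp (- \<sigma> * t)) / \<sigma>) {0..t}"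
proof -
  have "((\<lambda>s. exp (- \<sigma> * (t - s))) has_integral
      exp (- \<sigma> * (t - t)) / \<sigma> - exp (- \<sigma> * (t - 0)) / \<sigma>) {0..t}"
    using assms
    by (intro fundamental_theorem_of_calculus)
      (auto intro!: derivative_eq_intros simp flip: has_real_derivative_iff_has_vector_derivative)
  then show ?thesis
    by (simp add: diff_divide_distrib)
qed

lemma le_of_forall_pos_le_add_mult:
  fixes a b c :: real
  assumes "\<And>h. 0 < h \<Longrightarrow> a \<le> b + h * c"
  shows "a \<le> b"
proof -
  have "((\<lambda>h. b + h * c) \<longlongrightarrow> b + 0 * c) (at_right 0)"
    by (intro tendsto_intros)
  moreover have "\<forall>\<^sub>F h in at_right 0. a \<le> b + h * c"
    using assms by (intro eventually_at_rightI[where b = 1]) auto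
  ultimately show ?thesis
    using tendsto_le[OF trivial_limit_at_right_real _ tendsto_const] by fastforce
qed

locale exponentially_stable =
  fixes A :: "real^'n::finite^'n" and M \<sigma> :: real
  assumes sigma_pos: "0 < \<sigma>"
    and norm2_mat_exp_le: "\<forall>t\<ge>0. norm2 (mat_exp (t *\<^sub>R A)) \<le> M * exp (- \<sigma> * t)"
begin

lemma norm_mat_exp_mult_le:
  assumes "0 \<le> r"
  shows "norm (mat_exp (r *\<^sub>R A) *v v) \<le> M * exp (- \<sigma> * r) * norm v"
proof -
  have "norm (mat_exp (r *\<^sub>R A) *v v) \<le> norm2 (mat_exp (r *\<^sub>R A)) * norm v"
    unfolding norm2_def by (rule onorm) simp
  also have "\<dots> \<le> M * exp (- \<sigma> * r) * norm v"
    using norm2_mat_exp_le assms by (intro mult_right_mono) auto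
  finally show ?thesis .
qed

lemma M_nonneg: "0 \<le> M"
proof -
  have "0 \<le> norm2 (mat_exp (0 *\<^sub>R A))"
    unfolding norm2_def by (rule onorm_pos_le[OF matrix_vector_mul_bounded_linear])
  also have "\<dots> \<le> M * exp (- \<sigma> * 0)"
    using norm2_mat_exp_le by blast
  finally show ?thesis
    by simp
qed

lemma norm_mat_exp_mult_le_M:
  assumes "0 \<le> r"
  shows "norm (mat_exp (r *\<^sub>R A) *v v) \<le> M * norm v"
proof -
  have "M * exp (- \<sigma> * r) * norm v \<le> M * 1 * norm v"
    using M_nonneg sigma_pos assms by (intro mult_right_mono mult_left_mono) auto
  then show ?thesis
    using norm_mat_exp_mult_le[OF assms, of v] by simp
qed

lemma norm_stieltjes_convolution_le_sup:
  assumes "0 \<le> t" "continuous_on {0..t} D" "\<And>s. s \<in> {0..t} \<Longrightarrow> norm (D s) \<le> \<delta>"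
  shows "norm (stieltjes_convolution A D t) \<le> (1 + t * M * norm2 A) * \<delta>"
proof -
  let ?J = "integral {0..t} (\<lambda>s. mat_exp ((t - s) *\<^sub>R A) *v (A *v D s))"
  have "norm ?J \<le> (M * (norm2 A * \<delta>)) * (t - 0)"
  proof (rule integral_bound)
    fix s assume s: "s \<in> {0..t}"
    have "norm (mat_exp ((t - s) *\<^sub>R A) *v (A *v D s)) \<le> M * norm (A *v D s)"
      using s by (intro norm_mat_exp_mult_le_M) auto
    also have "\<dots> \<le> M * (norm2 A * \<delta>)"
    proof (intro mult_left_mono M_nonneg)
      have "norm (A *v D s) \<le> norm2 A * norm (D s)"
        unfolding norm2_def by (rule onorm) simp
      also have "\<dots> \<le> norm2 A * \<delta>"
        using assms(3)[OF s] onorm_pos_le[OF matrix_vector_mul_bounded_linear]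
        by (intro mult_left_mono) (auto simp: norm2_def)
      finally show "norm (A *v D s) \<le> norm2 A * \<delta>" .
    qed
    finally show "norm (mat_exp ((t - s) *\<^sub>R A) *v (A *v D s)) \<le> M * (norm2 A * \<delta>)" .
  qed (use assms in \<open>auto intro!: continuous_intros\<close>)
  moreover have "norm (D t) \<le> \<delta>"
    using assms by auto
  ultimately show ?thesis
    using norm_triangle_ineq[of "D t" ?J] unfolding stieltjes_convolution_def
    by (simp add: algebra_simps)
qed

lemma norm_stieltjes_convolution_C1_le:
  assumes "0 \<le> t"
    and "\<And>s. s \<in> {0..t} \<Longrightarrow> (V has_vector_derivative V' s) (at s within {0..t})"
    and V': "\<And>s. s \<in> {0..t} \<Longrightarrow> norm (V' s) \<le> L"
  shows "norm (stieltjes_convolution A V t) \<le> M * norm (V 0) + M * L / \<sigma>"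
proof -
  let ?K = "integral {0..t} (\<lambda>s. mat_exp ((t - s) *\<^sub>R A) *v V' s)"
  have K: "((\<lambda>s. mat_exp ((t - s) *\<^sub>R A) *v V' s) has_integral
      stieltjes_convolution A V t - mat_exp (t *\<^sub>R A) *v V 0) {0..t}"
    by (rule has_integral_stieltjes_convolution[OF assms(1,2)])
  have "norm (V' 0) \<le> L"
    using assms(1) by (intro V') simp
  then have L: "0 \<le> L"
    by (rule order_trans[OF norm_ge_zero])
  have "norm ?K \<le> integral {0..t} (\<lambda>s. M * L * exp (- \<sigma> * (t - s)))"
  proof (rule integral_norm_bound_integral)
    fix s assume s: "s \<in> {0..t}"
    have "norm (mat_exp ((t - s) *\<^sub>R A) *v V' s) \<le> M * exp (- \<sigma> * (t - s)) * norm (V' s)"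
      using s by (intro norm_mat_exp_mult_le) auto
    also have "\<dots> \<le> M * exp (- \<sigma> * (t - s)) * L"
      using s M_nonneg by (intro mult_left_mono V') auto
    finally show "norm (mat_exp ((t - s) *\<^sub>R A) *v V' s) \<le> M * L * exp (- \<sigma> * (t - s))"
      by (simp add: ac_simps)
  next
    show "(\<lambda>s. mat_exp ((t - s) *\<^sub>R A) *v V' s) integrable_on {0..t}"
      using K by (rule has_integral_integrable)
    show "(\<lambda>s. M * L * exp (- \<sigma> * (t - s))) integrable_on {0..t}"
      by (intro integrable_continuous_real continuous_intros)
  qed
  also have "\<dots> = M * L * ((1 - exp (- \<sigma> * t)) / \<sigma>)"
    using integral_unique[OF has_integral_exp_decay[of \<sigma> t]] sigma_pos assms(1) by simp
  also have "\<dots> \<le> M * L * (1 / \<sigma>)"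
    using M_nonneg L sigma_pos by (intro mult_left_mono divide_right_mono) auto
  finally have "norm ?K \<le> M * L / \<sigma>"
    by simp
  moreover have "norm (mat_exp (t *\<^sub>R A) *v V 0) \<le> M * norm (V 0)"
    by (rule norm_mat_exp_mult_le_M[OF assms(1)])
  moreover have "norm (stieltjes_convolution A V t) \<le> norm (mat_exp (t *\<^sub>R A) *v V 0) + norm ?K"
    using integral_unique[OF K] norm_triangle_ineq[of "mat_exp (t *\<^sub>R A) *v V 0" ?K] by simp
  ultimately show ?thesis
    by linarith
qed

lemma norm_stieltjes_convolution_le:
  assumes W: "L-lipschitz_on {0..} W" and "W 0 = 0" and t: "0 \<le> t"
  shows "norm (stieltjes_convolution A W t) \<le> M * L / \<sigma>"
proof (rule le_of_forall_pos_le_add_mult)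
  fix h :: real assume h: "0 < h"
  let ?V = "steklov_average h W"
  have W_cont: "continuous_on {0..} W"
    by (rule lipschitz_on_continuous_on[OF W])
  have V: "(?V has_vector_derivative (W (s + h) - W s) /\<^sub>R h) (at s within {0..t})"
    if "s \<in> {0..t}" for s
    using h that by (intro has_vector_derivative_steklov_average W_cont) auto
  have V': "norm ((W (s + h) - W s) /\<^sub>R h) \<le> L" if "0 \<le> s" for s
    using lipschitz_on_normD[OF W, of "s + h" s] h that by (simp add: divide_simps)
  have V_W: "norm (?V s - W s) \<le> L * h" if "0 \<le> s" for s
    by (rule norm_steklov_average_diff_le[OF W h that])
  have "continuous_on {0..t} ?V"
    using V by (meson continuous_on_eq_continuous_within has_vector_derivative_continuous)
  moreover have "continuous_on {0..t} W"
    using W_cont by (rule continuous_on_subset) auto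
  ultimately have "norm (stieltjes_convolution A W t - stieltjes_convolution A ?V t)
      \<le> (1 + t * M * norm2 A) * (L * h)"
    using V_W t
    by (auto simp: norm_minus_commute stieltjes_convolution_diff[symmetric]
        intro!: norm_stieltjes_convolution_le_sup continuous_intros)
  moreover have "norm (stieltjes_convolution A ?V t) \<le> M * norm (?V 0) + M * L / \<sigma>"
    using V V' t by (intro norm_stieltjes_convolution_C1_le) auto
  moreover have "M * norm (?V 0) \<le> M * (L * h)"
    using V_W[of 0] \<open>W 0 = 0\<close> M_nonneg by (intro mult_left_mono) auto
  ultimately show "norm (stieltjes_convolution A W t) \<le> M * L / \<sigma> + h * (L * (M + 1 + t * M * norm2 A))"
    using norm_triangle_ineq2[of "stieltjes_convolution A W t" "stieltjes_convolution A ?V t"]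
    by (simp add: algebra_simps)
qed

lemma norm_le_of_bounded_input:
  fixes x g :: "real \<Rightarrow> real^'n"
  assumes x: "\<And>t. 0 \<le> t \<Longrightarrow> ((\<lambda>s. A *v x s + g s) has_integral (x t - x 0)) {0..t}"
    and g: "\<And>s. 0 \<le> s \<Longrightarrow> norm (g s) \<le> L" and t: "0 \<le> t"
  shows "norm (x t) \<le> M * norm (x 0) + M * L / \<sigma>"
proof -
  have "L-lipschitz_on {0..} (\<lambda>s. integral {0..s} g)"
    using integral_equation_input_integrable[OF x] g by (rule lipschitz_on_indefinite_integral)
  then have "norm (stieltjes_convolution A (\<lambda>s. integral {0..s} g) t) \<le> M * L / \<sigma>"
    using t by (intro norm_stieltjes_convolution_le) auto
  moreover have "norm (mat_exp (t *\<^sub>R A) *v x 0) \<le> M * norm (x 0)"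
    by (rule norm_mat_exp_mult_le_M[OF t])
  ultimately show ?thesis
    using integral_equation_solution[OF x t]
      norm_triangle_ineq[of "mat_exp (t *\<^sub>R A) *v x 0" "stieltjes_convolution A (\<lambda>s. integral {0..s} g) t"]
    by simp
qed

end

theorem mainTheorem9:
  fixes idx :: "'n::finite \<Rightarrow> nat" and a b :: "nat \<Rightarrow> real"
    and M \<sigma> :: real and x :: "real \<Rightarrow> real^'n"
  assumes "bij_betw idx UNIV {0..<CARD('n)}"
    and "hurwitz (obs_A idx a)"
    and "M > 0" and "\<sigma> > 0"
    and "\<forall>t\<ge>0. norm2 (mat_exp (t *\<^sub>R obs_A idx a)) \<le> M * exp (- \<sigma> * t)"
    and "relay_trajectory (obs_A idx a) (obs_B idx b) (obs_C idx) x"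
    and "norm (x 0) \<le> 2 * M * norm (obs_B idx b) / \<sigma>"
  shows "\<forall>t\<ge>0. norm (x t) \<le> M * (2 * M + 1) / \<sigma> * norm (obs_B idx b)"
proof (intro allI impI)
  fix t :: real assume t: "0 \<le> t"
  interpret exponentially_stable "obs_A idx a" M \<sigma>
    using assms(4,5) by unfold_locales
  obtain u where u: "\<forall>t\<ge>0. u t \<in> sign_set (obs_C idx \<bullet> x t)"
    and x: "\<forall>t\<ge>0. ((\<lambda>s. obs_A idx a *v x s - u s *\<^sub>R obs_B idx b) has_integral (x t - x 0)) {0..t}"
    using assms(6) unfolding relay_trajectory_def by blast
  have "norm (- u s *\<^sub>R obs_B idx b) \<le> norm (obs_B idx b)" if "0 \<le> s" for s
    using u that by (auto simp: sign_set_def mult_left_le_one_le split: if_splits)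
  then have "norm (x t) \<le> M * norm (x 0) + M * norm (obs_B idx b) / \<sigma>"
    using x t by (intro norm_le_of_bounded_input[where g = "\<lambda>s. - u s *\<^sub>R obs_B idx b"]) auto
  also have "\<dots> \<le> M * (2 * M * norm (obs_B idx b) / \<sigma>) + M * norm (obs_B idx b) / \<sigma>"
    using assms(3,7) by (intro add_right_mono mult_left_mono) auto
  also have "\<dots> = M * (2 * M + 1) / \<sigma> * norm (obs_B idx b)"
    using assms(4) by (simp add: field_simps)
  finally show "norm (x t) \<le> M * (2 * M + 1) / \<sigma> * norm (obs_B idx b)" .
qed

end
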